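(* Let $\Omega=\{\Omega_1,\dots,\Omega_N\}$ be a finite set of points with distance function $d$, let $p\notin\Omega$ be a further point (with $d$ defined on $\Omega\cup\{p\}$), and let $r\in\{1,\dots,N\}$. Define, for $t\in\{1,\dots,N\}$, $f(t)=\max\big(d(p,\Omega_t),\ MMJ(\Omega_t,\Omega_r~|~\Omega)\big)$, and $\mathbb{X}=\{f(t): t\in\{1,\dots,N\}\}$. Then $MMJ(p,\Omega_r~|~\Omega+p)=\min(\mathbb{X})$, where $\Omega+p=\Omega\cup\{p\}$.
   Context: $d$ is a distance function (e.g. Euclidean distance) on the points considered, symmetric, nonnegative, with $d(x,x)=0$. For a finite point set $S$, a path from $i$ to $j$ in $S$ is a finite sequence of points of $S$ (at least two) starting at $i$ and ending at $j$, with no repeated points except that start and end may coincide when $i=j$. A jump of a path is the distance $d(x,y)$ between two consecutive points $x,y$, and $max\_jump$ of a path is its largest jump. The Min-Max-Jump distance with context $S$ is $MMJ(i,j~|~S)=\min\{max\_jump(\epsilon): \epsilon \text{ a path from } i \text{ to } j \text{ in } S\}$ for $i,j\in S$, with $MMJ(i,i~|~S)=0$. *)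

theory Defs
  imports Complex_Main
begin

definition is_path :: "'a set \<Rightarrow> 'a \<Rightarrow> 'a \<Rightarrow> 'a list \<Rightarrow> bool" where
  "is_path S i j xs \<longleftrightarrow> 2 \<le> length xs \<and> set xs \<subseteq> S \<and> hd xs = i \<and> last xs = j \<and>
     (if i = j then distinct (tl xs) else distinct xs)"

definition max_jump :: "('a \<Rightarrow> 'a \<Rightarrow> real) \<Rightarrow> 'a list \<Rightarrow> real" where
  "max_jump d xs = Max {d (xs ! k) (xs ! (k + 1)) | k. k + 1 < length xs}"

definition MMJ :: "('a \<Rightarrow> 'a \<Rightarrow> real) \<Rightarrow> 'a \<Rightarrow> 'a \<Rightarrow> 'a set \<Rightarrow> real" where
  "MMJ d i j S = (if i = j then 0 else Min {max_jump d xs | xs. is_path S i j xs})"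

end

theory Submission
  imports Defs
begin

text \<open>A path from the new point p to r in \<Omega> + p visits p only at its start, so it is either the
  single jump from p to r, or a first jump from p to some t \<in> \<Omega> followed by a path from t to r inside \<Omega>.
  Minimising over the tail for a fixed t gives max (d p t) (MMJ d t r \<Omega>), and minimising over
  t gives the claim; the single jump is the case t = r, since MMJ d r r \<Omega> = 0 \<le> d p r.\<close>

lemma max_jump_eq_Max_map2: "max_jump d xs = Max (set (map2 d xs (tl xs)))"
proof -
  have "map2 d xs (tl xs) = map (\<lambda>k. d (xs ! k) (xs ! (k + 1))) [0..<length xs - 1]"
    by (rule nth_equalityI) (simp_all add: nth_tl)
  then show ?thesis
    unfolding max_jump_def by (auto simp: less_diff_conv intro!: arg_cong[where f = Max])
qed

lemma max_jump_pair [simp]: "max_jump d [x, y] = d x y"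
  by (simp add: max_jump_eq_Max_map2)

lemma max_jump_Cons_Cons:
  "ys \<noteq> [] \<Longrightarrow> max_jump d (x # y # ys) = max (d x y) (max_jump d (y # ys))"
  by (cases ys) (simp_all add: max_jump_eq_Max_map2 max.commute)

lemma finite_paths: "finite S \<Longrightarrow> finite {xs. is_path S i j xs}"
proof (rule finite_subset)
  assume "finite S"
  show "{xs. is_path S i j xs} \<subseteq> {xs. set xs \<subseteq> S \<and> length xs \<le> Suc (card S)}"
  proof clarify
    fix xs assume path: "is_path S i j xs"
    then have "distinct (tl xs)"
      unfolding is_path_def by (simp split: if_splits add: distinct_tl)
    moreover have "set (tl xs) \<subseteq> S"
      using path list.set_sel(2)[of xs] unfolding is_path_def by fastforce
    ultimately have "length (tl xs) \<le> card S"
      using \<open>finite S\<close> by (metis card_mono distinct_card)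
    with path show "set xs \<subseteq> S \<and> length xs \<le> Suc (card S)"
      unfolding is_path_def by simp
  qed
qed (rule finite_lists_length_le)

lemma MMJ_le_max_jump:
  assumes "finite S" "is_path S i j xs" "i \<noteq> j"
  shows "MMJ d i j S \<le> max_jump d xs"
  unfolding MMJ_def using assms by (auto intro!: Min_le finite_image_set finite_paths)

lemma MMJ_attained:
  assumes "finite S" "i \<in> S" "j \<in> S" "i \<noteq> j"
  obtains xs where "is_path S i j xs" "MMJ d i j S = max_jump d xs"
proof -
  have "is_path S i j [i, j]"
    using assms unfolding is_path_def by simp
  then have "Min {max_jump d xs | xs. is_path S i j xs} \<in> {max_jump d xs | xs. is_path S i j xs}"
    using assms by (intro Min_in finite_image_set finite_paths) auto
  with \<open>i \<noteq> j\<close> that show thesis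
    unfolding MMJ_def by auto
qed

lemma is_pathE:
  assumes "is_path S i j xs"
  obtains ys where "xs = i # ys" "ys \<noteq> []"
proof (cases xs)
  case Nil
  with assms show thesis
    unfolding is_path_def by simp
next
  case (Cons x ys)
  with assms have "x = i" "ys \<noteq> []"
    unfolding is_path_def by auto
  with Cons that show thesis
    by simp
qed

lemma is_path_Cons_new_point:
  assumes "is_path S t j ys" "t \<noteq> j" "p \<notin> S"
  shows "is_path (S \<union> {p}) p j (p # ys)"
proof -
  obtain zs where "ys = t # zs" "zs \<noteq> []"
    using assms(1) by (rule is_pathE)
  with assms show ?thesis
    unfolding is_path_def by auto
qed

lemma is_path_from_new_pointE:
  assumes "is_path (S \<union> {p}) p j xs" "p \<notin> S" "p \<noteq> j"
  obtains "j \<in> S" "xs = [p, j]"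
    | t ys where "xs = p # ys" "t \<noteq> j" "is_path S t j ys"
proof -
  obtain t zs where xs: "xs = p # t # zs"
    using assms(1) by (metis is_pathE list.exhaust)
  with assms have dist: "distinct (p # t # zs)" and "set (t # zs) \<subseteq> S"
    and last: "last (t # zs) = j"
    unfolding is_path_def by auto
  show thesis
  proof (cases "zs = []")
    case True
    with xs last \<open>set (t # zs) \<subseteq> S\<close> that(1) show thesis
      by simp
  next
    case False
    with dist last have "t \<noteq> j"
      by auto
    with False dist last \<open>set (t # zs) \<subseteq> S\<close> have "is_path S t j (t # zs)"
      unfolding is_path_def by (simp add: Suc_le_eq)
    with xs \<open>t \<noteq> j\<close> that(2) show thesis
      by simp
  qed
qed

lemma Min_le_Min_if_dominated:
  fixes A B :: "'a::linorder set"
  assumes "finite A" "finite B" "B \<noteq> {}" "\<And>b. b \<in> B \<Longrightarrow> \<exists>a\<in>A. a \<le> b"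
  shows "Min A \<le> Min B"
proof -
  obtain a where "a \<in> A" "a \<le> Min B"
    using assms(4) Min_in[OF assms(2,3)] by blast
  with assms(1) show ?thesis
    using Min_le order_trans by blast
qed

lemma max_jump_from_new_point_ge:
  assumes "finite S" "p \<notin> S" "p \<noteq> r" "0 \<le> d p r" "is_path (S \<union> {p}) p r xs"
  shows "\<exists>t\<in>S. max (d p t) (MMJ d t r S) \<le> max_jump d xs"
  using assms(5,2,3)
proof (cases rule: is_path_from_new_pointE)
  case 1
  with assms(4) show ?thesis
    unfolding MMJ_def by force
next
  case (2 t ys)
  then obtain zs where ys: "ys = t # zs" "zs \<noteq> []"
    by (auto elim: is_pathE)
  have "t \<in> S"
    using 2 ys unfolding is_path_def by auto
  moreover have "MMJ d t r S \<le> max_jump d ys"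
    using MMJ_le_max_jump[OF assms(1)] 2 by blast
  ultimately show ?thesis
    using 2 ys by (intro bexI[of _ t]) (auto simp: max_jump_Cons_Cons)
qed

lemma ex_path_from_new_point_max_jump_eq:
  assumes "finite S" "p \<notin> S" "t \<in> S" "r \<in> S" "0 \<le> d p r"
  obtains xs where "is_path (S \<union> {p}) p r xs" "max_jump d xs = max (d p t) (MMJ d t r S)"
proof (cases "t = r")
  case True
  have "is_path (S \<union> {p}) p r [p, r]"
    using assms unfolding is_path_def by auto
  with True assms(5) that show thesis
    unfolding MMJ_def by force
next
  case False
  obtain ys where ys: "is_path S t r ys" "MMJ d t r S = max_jump d ys"
    using MMJ_attained[OF assms(1,3,4) False] .
  then obtain zs where "ys = t # zs" "zs \<noteq> []"
    by (auto elim: is_pathE)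
  with ys False assms(2) that show thesis
    using is_path_Cons_new_point by (fastforce simp: max_jump_Cons_Cons)
qed

theorem corollary3p4:
  fixes d :: "'a \<Rightarrow> 'a \<Rightarrow> real" and \<Omega> :: "'a set" and p r :: 'a
  assumes "finite \<Omega>"
    and "p \<notin> \<Omega>"
    and "r \<in> \<Omega>"
    and "\<And>x y. x \<in> \<Omega> \<union> {p} \<Longrightarrow> y \<in> \<Omega> \<union> {p} \<Longrightarrow> d x y = d y x"
    and "\<And>x y. x \<in> \<Omega> \<union> {p} \<Longrightarrow> y \<in> \<Omega> \<union> {p} \<Longrightarrow> 0 \<le> d x y"
    and "\<And>x. x \<in> \<Omega> \<union> {p} \<Longrightarrow> d x x = 0"
  shows "MMJ d p r (\<Omega> \<union> {p}) = Min {max (d p t) (MMJ d t r \<Omega>) | t. t \<in> \<Omega>}"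
proof -
  let ?A = "{max_jump d xs | xs. is_path (\<Omega> \<union> {p}) p r xs}"
  let ?B = "{max (d p t) (MMJ d t r \<Omega>) | t. t \<in> \<Omega>}"
  have "p \<noteq> r" "0 \<le> d p r"
    using assms(2,3,5) by auto
  have "is_path (\<Omega> \<union> {p}) p r [p, r]"
    using \<open>p \<noteq> r\<close> assms(3) unfolding is_path_def by simp
  then have "?A \<noteq> {}" "?B \<noteq> {}"
    using assms(3) by blast+
  moreover have "finite ?A" "finite ?B"
    using assms(1) by (auto intro: finite_image_set finite_paths)
  moreover have "\<exists>b\<in>?B. b \<le> a" if "a \<in> ?A" for a
    using that max_jump_from_new_point_ge[of \<Omega> p r d] assms(1,2) \<open>p \<noteq> r\<close> \<open>0 \<le> d p r\<close>
    by blast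
  moreover have "\<exists>a\<in>?A. a \<le> b" if b: "b \<in> ?B" for b
  proof -
    obtain t where "t \<in> \<Omega>" "b = max (d p t) (MMJ d t r \<Omega>)"
      using b by blast
    with assms(1,2,3) \<open>0 \<le> d p r\<close> obtain xs
      where "is_path (\<Omega> \<union> {p}) p r xs" "max_jump d xs = b"
      by (auto elim: ex_path_from_new_point_max_jump_eq)
    then show ?thesis
      by blast
  qed
  ultimately have "Min ?A = Min ?B"
    by (intro antisym Min_le_Min_if_dominated)
  with \<open>p \<noteq> r\<close> show ?thesis
    unfolding MMJ_def by simp
qed

end
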